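(* Let $n$ be a positive integer, and let $g_0,h_0:\mathbb{R}\to\mathbb{R}$ be $g_0(x)=nx$, $h_0(x)=x+1$ (these generate the standard affine action of $\mathrm{BS}(1,n)$, satisfying $g_0h_0g_0^{-1}=h_0^n$). There exist neighborhoods $U$ of $g_0$ and $V$ of $h_0$ in the uniform $C^1$ topology on $C^1$ diffeomorphisms of $\mathbb{R}$ such that whenever $g\in U$, $h\in V$ and the correspondence $g_0\mapsto g$, $h_0\mapsto h$ extends to an isomorphism from the group generated by $g_0,h_0$ onto the group generated by $g,h$, the action of $\langle g,h\rangle$ on $\mathbb{R}$ is topologically conjugate to that of $\langle g_0,h_0\rangle$; i.e. there is a homeomorphism $\phi$ of $\mathbb{R}$ with $\phi g=g_0\phi$ and $\phi h=h_0\phi$.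
   Context: The uniform $C^1$ topology is the one given by the distance $\sup_{x\in\mathbb{R}}\big(|f(x)-k(x)|+|f'(x)-k'(x)|\big)$ between maps $f,k$. *)

theory Defs
  imports "HOL-Analysis.Analysis" "HOL-Algebra.Bij" "HOL-Algebra.Generated_Groups"
begin

definition C1_fun :: "(real \<Rightarrow> real) \<Rightarrow> bool" where
  "C1_fun f \<longleftrightarrow> (\<forall>x. f differentiable (at x)) \<and> continuous_on UNIV (deriv f)"

definition C1_diffeo :: "(real \<Rightarrow> real) \<Rightarrow> bool" where
  "C1_diffeo f \<longleftrightarrow> bij f \<and> C1_fun f \<and> C1_fun (inv_into UNIV f)"

abbreviation RBij :: "(real \<Rightarrow> real) monoid" where
  "RBij \<equiv> BijGroup (UNIV :: real set)"

end

theory Submission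
  imports Defs
begin

(* C^1-closeness makes h an increasing homeomorphism moving every point forward by between 1/2
   and 3/2, and, for n >= 2, makes g expand distances by the factor 3/2, so g has a fixed point p.
   The isomorphism transfers the relation g h = h^n g, and forces g = id when n = 1.
   The points h^m p cut the line into fundamental domains [h^m p, h^(m+1) p); let r(y) be the
   index of the domain containing y. The relation gives n r(y) <= r(g y) < n (r(y) + 1), so
   r(g^k y) / n^k increases to a limit phi(y) with phi h = phi + 1 and phi g = n phi. Expansion
   of g pushes g^k x and g^k y many domains apart, so phi is strictly increasing, and continuity
   of g^k makes phi continuous; thus phi is the conjugacy. For n = 1 it suffices to conjugate h
   to the unit translation, which the chart that is affine on [p, h p) and extended
   h-equivariantly does. *)

lemma carrier_BijGroup_UNIV: "f \<in> carrier (BijGroup UNIV) \<longleftrightarrow> bij f"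
  by (simp add: BijGroup_def Bij_def bij_betw_def)

lemma mult_BijGroup_UNIV: "bij f \<Longrightarrow> bij k \<Longrightarrow> f \<otimes>\<^bsub>BijGroup UNIV\<^esub> k = f \<circ> k"
  by (simp add: BijGroup_def compose_def o_def Bij_def bij_betw_def restrict_def)

lemma one_BijGroup_UNIV: "\<one>\<^bsub>BijGroup UNIV\<^esub> = id"
  by (simp add: BijGroup_def id_def restrict_def)

lemma pow_BijGroup_UNIV: "bij f \<Longrightarrow> f [^]\<^bsub>BijGroup UNIV\<^esub> (k::nat) = f ^^ k"
proof (induction k)
  case 0
  then show ?case by (simp add: one_BijGroup_UNIV)
next
  case (Suc k)
  then show ?case
    by (simp add: mult_BijGroup_UNIV bij_betw_funpow funpow_Suc_right del: funpow.simps)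
qed

lemma group_subgroup_generated_BijGroup: "group (subgroup_generated (BijGroup UNIV) S)"
  by (rule group.group_subgroup_generated[OF group_BijGroup])

lemma hom_subgroup_generated_BijGroup_id:
  assumes "\<psi> \<in> hom (subgroup_generated (BijGroup UNIV) A) (subgroup_generated (BijGroup UNIV) B)"
  shows "\<psi> id = id"
  using hom_one[OF assms group_subgroup_generated_BijGroup group_subgroup_generated_BijGroup]
  by (simp add: one_BijGroup_UNIV)

lemma hom_subgroup_generated_BijGroup_relation:
  assumes hom: "\<psi> \<in> hom (subgroup_generated (BijGroup UNIV) {a, b}) (subgroup_generated (BijGroup UNIV) B)"
    and "bij a" "bij b" and rel: "a \<circ> b = (b ^^ n) \<circ> a"
  shows "\<psi> a \<circ> \<psi> b = (\<psi> b ^^ n) \<circ> \<psi> a"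
proof -
  let ?G = "subgroup_generated (BijGroup UNIV) {a, b}"
  let ?H = "subgroup_generated (BijGroup UNIV) B"
  have a: "a \<in> carrier ?G" and b: "b \<in> carrier ?G"
    using assms(2,3) by (auto simp: carrier_subgroup_generated carrier_BijGroup_UNIV intro: generate.incl)
  have bij_H: "bij k" if "k \<in> carrier ?H" for k
    using that group.carrier_subgroup_generated_subset[OF group_BijGroup] carrier_BijGroup_UNIV by blast
  have "a \<otimes>\<^bsub>?G\<^esub> b = b [^]\<^bsub>?G\<^esub> n \<otimes>\<^bsub>?G\<^esub> a"
    using assms(2,3) rel
    by (simp add: pow_subgroup_generated pow_BijGroup_UNIV mult_BijGroup_UNIV bij_betw_funpow)
  then have "\<psi> (a \<otimes>\<^bsub>?G\<^esub> b) = \<psi> (b [^]\<^bsub>?G\<^esub> n \<otimes>\<^bsub>?G\<^esub> a)"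
    by (rule arg_cong)
  then have "\<psi> a \<otimes>\<^bsub>?H\<^esub> \<psi> b = \<psi> b [^]\<^bsub>?H\<^esub> n \<otimes>\<^bsub>?H\<^esub> \<psi> a"
    using monoid.nat_pow_closed[OF group.is_monoid[OF group_subgroup_generated_BijGroup] b]
    by (simp only: hom_mult[OF hom] a b hom_nat_pow[OF hom b group_subgroup_generated_BijGroup
          group_subgroup_generated_BijGroup])
  then show ?thesis
    using bij_H[OF hom_in_carrier[OF hom a]] bij_H[OF hom_in_carrier[OF hom b]]
    by (simp add: pow_subgroup_generated pow_BijGroup_UNIV mult_BijGroup_UNIV bij_betw_funpow)
qed

lemma strict_mono_surj_imp_homeomorphism:
  fixes f :: "real \<Rightarrow> real"
  assumes "strict_mono f" "surj f"
  shows "homeomorphism UNIV UNIV f (inv_into UNIV f)"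
proof -
  have continuous: "continuous_on UNIV k" if "strict_mono k" "surj k" for k :: "real \<Rightarrow> real"
    by (rule continuous_onI_mono) (use that in \<open>auto simp: strict_mono_less_eq\<close>)
  have inv_f: "inv_into UNIV f (f x) = x" for x
    using strict_mono_imp_inj_on[OF assms(1)] by simp
  have "strict_mono (inv_into UNIV f)" "surj (inv_into UNIV f)"
    using strict_mono_inv[OF assms inv_f] surjI[of "inv_into UNIV f" f, OF inv_f] by auto
  then show ?thesis
    unfolding homeomorphism_def using assms continuous inv_f by (auto simp: surj_f_inv_f)
qed

lemma deriv_ge_imp_expanding:
  fixes f :: "real \<Rightarrow> real"
  assumes "\<And>x. (f has_real_derivative deriv f x) (at x)" and "\<And>x. c \<le> deriv f x" and "x \<le> y"
  shows "c * (y - x) \<le> f y - f x"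
proof -
  have "(\<lambda>t. f t - c * t) x \<le> (\<lambda>t. f t - c * t) y"
  proof (rule DERIV_nonneg_imp_nondecreasing[OF assms(3)])
    fix t
    show "\<exists>d. ((\<lambda>t. f t - c * t) has_real_derivative d) (at t) \<and> 0 \<le> d"
      using assms(2)[of t]
      by (intro exI[of _ "deriv f t - c"]) (auto intro!: derivative_eq_intros assms(1))
  qed
  then show ?thesis by (simp add: algebra_simps)
qed

lemma expanding_imp_fixed_point:
  fixes g :: "real \<Rightarrow> real"
  assumes "continuous_on UNIV g" and "1 < c" and "\<And>x y. x \<le> y \<Longrightarrow> c * (y - x) \<le> g y - g x"
  obtains p where "g p = p"
proof -
  define M where "M = \<bar>g 0\<bar> / (c - 1)"
  have M: "0 \<le> M" "(c - 1) * M = \<bar>g 0\<bar>"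
    using assms(2) by (auto simp: M_def)
  have "c * M \<le> g 0 - g (- M)" "c * M \<le> g M - g 0"
    using assms(3)[of "- M" 0] assms(3)[of 0 M] M(1) by auto
  then have "g (- M) - (- M) \<le> 0" "0 \<le> g M - M"
    using M(2) left_diff_distrib[of c 1 M] abs_ge_self[of "g 0"] abs_ge_minus_self[of "g 0"] by linarith+
  moreover have "continuous_on {- M..M} (\<lambda>t. g t - t)"
    by (intro continuous_intros continuous_on_subset[OF assms(1)]) auto
  ultimately obtain p where "g p - p = 0"
    using IVT'[of "\<lambda>t. g t - t" "- M" 0 M] M(1) by auto
  then show ?thesis using that by simp
qed

(* The parameter p only serves as the base point of the fundamental domains [hpow m p, hpow (m+1) p). *)
locale bounded_displacement =
  fixes h :: "real \<Rightarrow> real" and p c C :: real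
  assumes strict_mono_h: "strict_mono h" and surj_h: "surj h" and c_pos: "0 < c"
    and displacement_ge: "\<And>x. x + c \<le> h x" and displacement_le: "\<And>x. h x \<le> x + C"
begin

lemma inv_h_h [simp]: "inv_into UNIV h (h x) = x"
  using strict_mono_imp_inj_on[OF strict_mono_h] by simp

lemma h_inv_h [simp]: "h (inv_into UNIV h x) = x"
  using surj_h by (simp add: surj_f_inv_f)

lemma h_less_iff [simp]: "h x < h y \<longleftrightarrow> x < y"
  using strict_mono_h by (simp add: strict_mono_less)

lemma inv_h_less_iff [simp]: "inv_into UNIV h x < inv_into UNIV h y \<longleftrightarrow> x < y"
  by (metis h_inv_h h_less_iff)

lemma inv_h_le: "inv_into UNIV h x \<le> x - c"
  using displacement_ge[of "inv_into UNIV h x"] by simp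

definition hpow :: "int \<Rightarrow> real \<Rightarrow> real" where
  "hpow m = (if 0 \<le> m then h ^^ nat m else inv_into UNIV h ^^ nat (- m))"

lemma hpow_0 [simp]: "hpow 0 x = x"
  by (simp add: hpow_def)

lemma hpow_of_nat: "hpow (int N) = h ^^ N"
  by (simp add: hpow_def)

lemma hpow_succ: "hpow (m + 1) x = h (hpow m x)"
proof (cases "0 \<le> m")
  case True
  then have "nat (m + 1) = Suc (nat m)" by simp
  with True show ?thesis by (simp add: hpow_def)
next
  case False
  then have "nat (- m) = Suc (nat (- (m + 1)))" by simp
  with False show ?thesis by (simp add: hpow_def)
qed

lemma hpow_pred: "hpow (m - 1) x = inv_into UNIV h (hpow m x)"
  using hpow_succ[of "m - 1" x] by simp

lemma hpow_1 [simp]: "hpow 1 x = h x"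
  using hpow_succ[of 0 x] by simp

lemma hpow_add: "hpow (m + k) x = hpow m (hpow k x)"
proof (induction m rule: int_induct[where k = 0])
  case (step1 i)
  then show ?case by (metis add.commute add.left_commute hpow_succ)
next
  case (step2 i)
  then show ?case by (metis add.commute add_diff_eq hpow_pred)
qed simp

lemma hpow_neg_cancel [simp]: "hpow (- m) (hpow m x) = x"
  using hpow_add[of "- m" m x] by simp

lemma strict_mono_hpow: "strict_mono (hpow m)"
proof (rule strict_monoI)
  show "hpow m x < hpow m y" if "x < y" for x y
    using that by (induction m rule: int_induct[where k = 0]) (simp_all add: hpow_succ hpow_pred)
qed

lemma hpow_less_iff [simp]: "hpow m x < hpow m y \<longleftrightarrow> x < y"
  using strict_mono_hpow by (simp add: strict_mono_less)

lemma hpow_le_iff [simp]: "hpow m x \<le> hpow m y \<longleftrightarrow> x \<le> y"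
  using strict_mono_hpow by (simp add: strict_mono_less_eq)

lemma hpow_less_succ: "hpow m x < hpow (m + 1) x"
  using displacement_ge[of "hpow m x"] c_pos by (simp add: hpow_succ)

lemma hpow_mono_exponent: "m \<le> k \<Longrightarrow> hpow m x \<le> hpow k x"
proof (induction k rule: int_ge_induct)
  case (step i)
  then show ?case using hpow_less_succ[of i x] by linarith
qed simp

lemma hpow_ge_linear: "0 \<le> m \<Longrightarrow> x + m * c \<le> hpow m x"
proof (induction m rule: int_ge_induct)
  case (step i)
  then show ?case
    using displacement_ge[of "hpow i x"] by (simp add: hpow_succ distrib_right)
qed simp

lemma hpow_le_linear: "m \<le> 0 \<Longrightarrow> hpow m x \<le> x + m * c"
proof (induction m rule: int_le_induct)
  case (step i)
  then show ?case
    using inv_h_le[of "hpow i x"] by (simp add: hpow_pred left_diff_distrib)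
qed simp

definition domain_index :: "real \<Rightarrow> int" where
  "domain_index y = (THE m. hpow m p \<le> y \<and> y < hpow (m + 1) p)"

lemma domain_index_unique: "y < hpow (m + 1) p \<Longrightarrow> hpow k p \<le> y \<Longrightarrow> k \<le> m"
  using hpow_mono_exponent[of "m + 1" k p] by force

lemma domain_index_exists: "\<exists>m. hpow m p \<le> y \<and> y < hpow (m + 1) p"
proof (rule ccontr)
  assume "\<nexists>m. hpow m p \<le> y \<and> y < hpow (m + 1) p"
  then have step: "hpow m p \<le> y \<Longrightarrow> hpow (m + 1) p \<le> y" for m
    by (meson not_less)
  obtain N :: nat where N: "\<bar>y - p\<bar> < N * c"
    using ex_less_of_nat_mult[OF c_pos] by blast
  have "hpow m p \<le> y" if "- int N \<le> m" for m
    using that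
  proof (induction m rule: int_ge_induct)
    case base
    show ?case using hpow_le_linear[of "- int N" p] N by (simp add: abs_less_iff)
  qed (rule step)
  from this[of "int N"] have "hpow (int N) p \<le> y" by simp
  moreover have "y < hpow (int N) p"
    using hpow_ge_linear[of "int N" p] N by (simp add: abs_less_iff)
  ultimately show False by simp
qed

lemma domain_index_bounds: "hpow (domain_index y) p \<le> y" "y < hpow (domain_index y + 1) p"
proof -
  have "\<exists>!m. hpow m p \<le> y \<and> y < hpow (m + 1) p"
    by (metis domain_index_exists domain_index_unique order.antisym)
  from theI'[OF this] show "hpow (domain_index y) p \<le> y" "y < hpow (domain_index y + 1) p"
    unfolding domain_index_def by auto
qed

lemma domain_index_eqI: "hpow m p \<le> y \<Longrightarrow> y < hpow (m + 1) p \<Longrightarrow> domain_index y = m"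
  by (meson domain_index_bounds domain_index_unique order.antisym)

lemma domain_index_hpow_base [simp]: "domain_index (hpow m p) = m"
  by (rule domain_index_eqI) (simp_all add: hpow_less_succ)

lemma domain_index_mono: "u \<le> v \<Longrightarrow> domain_index u \<le> domain_index v"
  by (meson domain_index_bounds domain_index_unique order_trans)

lemma domain_index_hpow: "domain_index (hpow m y) = domain_index y + m"
proof (rule domain_index_eqI)
  show "hpow (domain_index y + m) p \<le> hpow m y"
    using domain_index_bounds(1)[of y] by (simp add: hpow_add add.commute)
  show "hpow m y < hpow (domain_index y + m + 1) p"
  proof -
    have "hpow (domain_index y + m + 1) p = hpow m (hpow (domain_index y + 1) p)"
      by (simp only: hpow_add[symmetric]) (simp add: ac_simps)
    then show ?thesis using domain_index_bounds(2)[of y] by simp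
  qed
qed

lemma domain_index_h: "domain_index (h y) = domain_index y + 1"
  using domain_index_hpow[of 1 y] by simp

lemma domain_index_close:
  assumes "\<bar>u - v\<bar> < c"
  shows "\<bar>domain_index u - domain_index v\<bar> \<le> 1"
proof -
  have "domain_index v \<le> domain_index u + 1" if "u \<le> v" "v < u + c" for u v
  proof (rule domain_index_unique)
    show "v < hpow (domain_index u + 1 + 1) p"
      using hpow_succ[of "domain_index u + 1" p] displacement_ge[of "hpow (domain_index u + 1) p"]
        domain_index_bounds(2)[of u] that by linarith
  qed (rule domain_index_bounds(1))
  from this[of u v] this[of v u] show ?thesis
    using assms domain_index_mono[of u v] domain_index_mono[of v u]
    by (cases "u \<le> v") (auto simp: abs_le_iff abs_less_iff)
qed

lemma domain_index_far: "u + 2 * C \<le> v \<Longrightarrow> domain_index u + 2 \<le> domain_index v"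
proof -
  assume far: "u + 2 * C \<le> v"
  have "hpow (domain_index u + 2) p = h (h (hpow (domain_index u) p))"
    by (metis add.assoc hpow_succ one_add_one)
  then have "hpow (domain_index u + 2) p \<le> v"
    using displacement_le[of "h (hpow (domain_index u) p)"] displacement_le[of "hpow (domain_index u) p"]
      domain_index_bounds(1)[of u] far by linarith
  then show ?thesis using domain_index_mono by fastforce
qed

definition translation_chart :: "real \<Rightarrow> real" where
  "translation_chart y = domain_index y + (hpow (- domain_index y) y - p) / (h p - p)"

lemma hpow_domain_index_bounds:
  "p \<le> hpow (- domain_index y) y" "hpow (- domain_index y) y < h p"
proof -
  have "hpow (- domain_index y) (hpow (domain_index y + 1) p) = h p"
    using hpow_add[of "- domain_index y" "domain_index y + 1" p] by simp
  then show "p \<le> hpow (- domain_index y) y" "hpow (- domain_index y) y < h p"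
    using domain_index_bounds[of y] hpow_le_iff[of "- domain_index y" "hpow (domain_index y) p" y]
      hpow_less_iff[of "- domain_index y" y "hpow (domain_index y + 1) p"] by auto
qed

lemma translation_chart_h: "translation_chart (h y) = translation_chart y + 1"
proof -
  have "hpow (- domain_index y - 1) (h y) = hpow (- domain_index y) y"
    using hpow_add[of "- domain_index y - 1" 1 y] by simp
  then show ?thesis by (simp add: translation_chart_def domain_index_h)
qed

lemma translation_chart_fraction:
  "0 \<le> (hpow (- domain_index y) y - p) / (h p - p)" "(hpow (- domain_index y) y - p) / (h p - p) < 1"
  using hpow_domain_index_bounds[of y] by (auto simp: divide_simps)

lemma strict_mono_translation_chart: "strict_mono translation_chart"
proof (rule strict_monoI)
  fix x y :: real
  assume "x < y"
  show "translation_chart x < translation_chart y"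
  proof (cases "domain_index x = domain_index y")
    case True
    then show ?thesis
      using \<open>x < y\<close> displacement_ge[of p] c_pos
      by (simp add: translation_chart_def divide_strict_right_mono)
  next
    case False
    then have "domain_index x + 1 \<le> domain_index y"
      using domain_index_mono[of x y] \<open>x < y\<close> by simp
    then show ?thesis
      unfolding translation_chart_def
      using translation_chart_fraction[of x] translation_chart_fraction[of y] by linarith
  qed
qed

lemma surj_translation_chart: "surj translation_chart"
proof -
  have "t \<in> range translation_chart" for t
  proof -
    define s where "s = t - \<lfloor>t\<rfloor>"
    define z where "z = p + s * (h p - p)"
    have "0 \<le> s" "s < 1"
      unfolding s_def by linarith+
    moreover have "0 < h p - p"
      using displacement_ge[of p] c_pos by simp
    ultimately have "0 \<le> s * (h p - p)" "s * (h p - p) < h p - p"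
      using mult_strict_right_mono[of s 1 "h p - p"] by simp_all
    then have "p \<le> z" "z < h p"
      unfolding z_def by linarith+
    then have "domain_index z = 0"
      by (intro domain_index_eqI) simp_all
    then have "translation_chart (hpow \<lfloor>t\<rfloor> z) = t"
      using \<open>0 < h p - p\<close> by (simp add: translation_chart_def domain_index_hpow z_def s_def)
    then show ?thesis by (metis rangeI)
  qed
  then show ?thesis by auto
qed

lemma conjugate_to_translation:
  "\<exists>\<phi> \<phi>'. homeomorphism UNIV UNIV \<phi> \<phi>' \<and> \<phi> \<circ> h = (\<lambda>x::real. x + 1) \<circ> \<phi>"
proof -
  have "homeomorphism UNIV UNIV translation_chart (inv_into UNIV translation_chart)"
    by (rule strict_mono_surj_imp_homeomorphism[OF strict_mono_translation_chart surj_translation_chart])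
  moreover have "translation_chart \<circ> h = (\<lambda>x. x + 1) \<circ> translation_chart"
    by (simp add: fun_eq_iff translation_chart_h)
  ultimately show ?thesis by blast
qed

end

locale BS_action = bounded_displacement +
  fixes g :: "real \<Rightarrow> real" and n :: nat and \<kappa> :: real
  assumes n_ge_2: "2 \<le> n" and g_p: "g p = p" and g_h: "\<And>x. g (h x) = (h ^^ n) (g x)"
    and continuous_g: "continuous_on UNIV g" and expansion_gt_1: "1 < \<kappa>"
    and g_expanding: "\<And>x y. x \<le> y \<Longrightarrow> \<kappa> * (y - x) \<le> g y - g x"
begin

lemma n_pos: "0 < real n"
  using n_ge_2 by simp

lemma g_less: "x < y \<Longrightarrow> g x < g y"
  using g_expanding[of x y] expansion_gt_1 by (smt (verit) mult_pos_pos)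

lemma g_le: "x \<le> y \<Longrightarrow> g x \<le> g y"
  using g_less[of x y] by (auto simp: order_le_less)

lemma g_hpow: "g (hpow m x) = hpow (int n * m) (g x)"
proof (induction m rule: int_induct[where k = 0])
  case (step1 i)
  have "g (hpow (i + 1) x) = hpow (int n) (g (hpow i x))"
    by (simp add: hpow_succ g_h hpow_of_nat)
  also have "\<dots> = hpow (int n * (i + 1)) (g x)"
    using step1 by (simp add: hpow_add[symmetric] algebra_simps)
  finally show ?case .
next
  case (step2 i)
  have "g (hpow (i - 1) x) = hpow (- int n) (g (h (hpow (i - 1) x)))"
    by (simp add: g_h hpow_of_nat[symmetric])
  also have "\<dots> = hpow (int n * (i - 1)) (g x)"
    using step2 hpow_succ[of "i - 1" x] by (simp add: hpow_add[symmetric] algebra_simps)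
  finally show ?case .
qed simp

lemma funpow_g_hpow: "(g ^^ k) (hpow m x) = hpow (int n ^ k * m) ((g ^^ k) x)"
  by (induction k) (simp_all add: g_hpow mult.assoc)

lemma domain_index_g:
  "int n * domain_index y \<le> domain_index (g y)" "domain_index (g y) < int n * (domain_index y + 1)"
proof -
  have "hpow (int n * domain_index y) p \<le> g y"
    using g_le[OF domain_index_bounds(1)[of y]] by (simp add: g_hpow g_p)
  then show "int n * domain_index y \<le> domain_index (g y)"
    using domain_index_mono by fastforce
  have "g y < hpow (int n * (domain_index y + 1) - 1 + 1) p"
    using g_less[OF domain_index_bounds(2)[of y]] by (simp add: g_hpow g_p)
  then show "domain_index (g y) < int n * (domain_index y + 1)"
    using domain_index_unique[OF _ domain_index_bounds(1)] by fastforce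
qed

definition chart_approx :: "nat \<Rightarrow> real \<Rightarrow> real" where
  "chart_approx k x = domain_index ((g ^^ k) x) / real n ^ k"

lemma chart_approx_Suc:
  "chart_approx k x \<le> chart_approx (Suc k) x"
  "chart_approx (Suc k) x \<le> chart_approx k x + (1 / real n ^ k - 1 / real n ^ Suc k)"
proof -
  define i where "i = domain_index ((g ^^ k) x)"
  define j where "j = domain_index ((g ^^ Suc k) x)"
  have "of_int (int n * i) \<le> (of_int j :: real)" "(of_int j :: real) \<le> of_int (int n * i + int n - 1)"
    using domain_index_g[of "(g ^^ k) x"] unfolding i_def j_def of_int_le_iff
    by (simp_all add: distrib_left)
  then have "real n * i \<le> j" "j \<le> real n * i + real n - 1"
    by simp_all
  moreover have approx: "chart_approx k x = real n * i / real n ^ Suc k"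
    "chart_approx (Suc k) x = j / real n ^ Suc k"
    using n_pos by (simp_all add: chart_approx_def i_def j_def)
  ultimately show "chart_approx k x \<le> chart_approx (Suc k) x"
    by (simp only: approx) (rule divide_right_mono, simp_all)
  have "chart_approx (Suc k) x \<le> (real n * i + real n - 1) / real n ^ Suc k"
    using \<open>j \<le> real n * i + real n - 1\<close> n_pos by (simp add: approx divide_right_mono)
  also have "\<dots> = chart_approx k x + (1 / real n ^ k - 1 / real n ^ Suc k)"
    using n_pos by (simp add: approx field_simps)
  finally show "chart_approx (Suc k) x \<le> chart_approx k x + (1 / real n ^ k - 1 / real n ^ Suc k)" .
qed

lemma chart_approx_telescope:
  "k \<le> j \<Longrightarrow> chart_approx j x \<le> chart_approx k x + (1 / real n ^ k - 1 / real n ^ j)"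
proof (induction j rule: dec_induct)
  case (step j)
  then show ?case using chart_approx_Suc(2)[of j x] by linarith
qed simp

lemma incseq_chart_approx: "incseq (\<lambda>k. chart_approx k x)"
  by (rule incseq_SucI) (rule chart_approx_Suc(1))

definition chart :: "real \<Rightarrow> real" where
  "chart x = lim (\<lambda>k. chart_approx k x)"

lemma chart_approx_le_bound: "k \<le> j \<Longrightarrow> chart_approx j x \<le> chart_approx k x + 1 / real n ^ k"
  using chart_approx_telescope[of k j x] by (smt (verit) divide_nonneg_nonneg zero_le_power of_nat_0_le_iff)

lemma LIMSEQ_chart_approx: "(\<lambda>k. chart_approx k x) \<longlonglongrightarrow> chart x"
proof -
  have "chart_approx k x \<le> chart_approx 0 x + 1" for k
    using chart_approx_le_bound[of 0 k x] by simp
  then show ?thesis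
    using incseq_convergent[OF incseq_chart_approx] unfolding chart_def by (metis limI)
qed

lemma chart_approx_le_chart: "chart_approx k x \<le> chart x"
  by (rule incseq_le[OF incseq_chart_approx LIMSEQ_chart_approx])

lemma chart_le_chart_approx: "chart x \<le> chart_approx k x + 1 / real n ^ k"
  using chart_approx_le_bound by (intro LIMSEQ_le_const2[OF LIMSEQ_chart_approx]) blast

lemma chart_hpow: "chart (hpow m x) = chart x + m"
proof -
  have "chart_approx k (hpow m x) = chart_approx k x + m" for k
    using n_pos by (simp add: chart_approx_def funpow_g_hpow domain_index_hpow add_divide_distrib)
  then have "(\<lambda>k. chart_approx k (hpow m x)) \<longlonglongrightarrow> chart x + m"
    using tendsto_add[OF LIMSEQ_chart_approx tendsto_const] by simp
  then show ?thesis using LIMSEQ_chart_approx LIMSEQ_unique by blast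
qed

lemma chart_h: "chart (h x) = chart x + 1"
  using chart_hpow[of 1 x] by simp

lemma chart_g: "chart (g x) = real n * chart x"
proof -
  have "chart_approx k (g x) = real n * chart_approx (Suc k) x" for k
    using n_pos by (simp add: chart_approx_def funpow_swap1)
  then have "(\<lambda>k. chart_approx k (g x)) \<longlonglongrightarrow> real n * chart x"
    using tendsto_mult_left[OF LIMSEQ_Suc[OF LIMSEQ_chart_approx]] by simp
  then show ?thesis using LIMSEQ_chart_approx LIMSEQ_unique by blast
qed

lemma chart_hpow_base: "chart (hpow m p) = m"
proof -
  have "(g ^^ k) p = p" for k
    by (induction k) (simp_all add: g_p)
  then have "chart_approx k p = 0" for k
    using domain_index_hpow_base[of 0] by (simp add: chart_approx_def)
  then have "chart p = 0"
    using LIMSEQ_chart_approx[of p] LIMSEQ_unique[OF _ tendsto_const] by simp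
  then show ?thesis by (simp add: chart_hpow)
qed

lemma funpow_g_expanding: "x \<le> y \<Longrightarrow> \<kappa> ^ k * (y - x) \<le> (g ^^ k) y - (g ^^ k) x"
proof (induction k)
  case (Suc k)
  have "(g ^^ k) x \<le> (g ^^ k) y"
    using Suc expansion_gt_1 by (smt (verit) mult_nonneg_nonneg zero_le_power)
  then have "\<kappa> * ((g ^^ k) y - (g ^^ k) x) \<le> (g ^^ Suc k) y - (g ^^ Suc k) x"
    by (simp add: g_expanding)
  moreover have "\<kappa> ^ Suc k * (y - x) \<le> \<kappa> * ((g ^^ k) y - (g ^^ k) x)"
    using Suc expansion_gt_1 by (simp add: mult.assoc)
  ultimately show ?case by linarith
qed simp

lemma strict_mono_chart: "strict_mono chart"
proof (rule strict_monoI)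
  fix x y :: real
  assume "x < y"
  obtain k where "2 * C / (y - x) < \<kappa> ^ k"
    using real_arch_pow[OF expansion_gt_1] by blast
  then have "(g ^^ k) x + 2 * C \<le> (g ^^ k) y"
    using funpow_g_expanding[of x y k] \<open>x < y\<close> by (simp add: pos_divide_less_eq)
  then have "domain_index ((g ^^ k) x) + 2 \<le> domain_index ((g ^^ k) y)"
    by (rule domain_index_far)
  then have "chart_approx k x + 2 / real n ^ k \<le> chart_approx k y"
    using n_pos by (simp add: chart_approx_def add_divide_distrib[symmetric] divide_right_mono)
  moreover have "1 / real n ^ k < 2 / real n ^ k"
    using n_pos by (simp add: divide_strict_right_mono)
  ultimately show "chart x < chart y"
    using chart_le_chart_approx[of x k] chart_approx_le_chart[of k y] by linarith
qed

lemma continuous_funpow_g: "continuous_on UNIV (g ^^ k)"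
proof (induction k)
  case (Suc k)
  then show ?case
    using continuous_on_compose[OF Suc continuous_on_subset[OF continuous_g]] by (simp add: o_def)
qed (simp add: id_def)

lemma continuous_chart: "continuous_on UNIV chart"
  unfolding continuous_on_iff
proof (intro ballI allI impI)
  fix x e :: real
  assume "0 < e"
  obtain k where "3 / e < real n ^ k"
    using real_arch_pow[of "real n" "3 / e"] n_ge_2 by auto
  then have small: "3 / real n ^ k < e"
    using \<open>0 < e\<close> n_pos by (simp add: divide_less_eq mult.commute)
  obtain d where "0 < d" and d: "\<And>y. dist y x < d \<Longrightarrow> dist ((g ^^ k) y) ((g ^^ k) x) < c"
    using continuous_funpow_g[of k] c_pos unfolding continuous_on_iff by (metis UNIV_I)
  have "dist (chart y) (chart x) < e" if "dist y x < d" for y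
  proof -
    have "\<bar>domain_index ((g ^^ k) y) - domain_index ((g ^^ k) x)\<bar> \<le> 1"
      using d[OF that] by (simp add: dist_real_def domain_index_close)
    then have "\<bar>chart_approx k y - chart_approx k x\<bar> \<le> 1 / real n ^ k"
      using n_pos by (simp add: chart_approx_def diff_divide_distrib[symmetric] abs_divide divide_right_mono)
    then show ?thesis
      using chart_le_chart_approx[of x k] chart_approx_le_chart[of k y] chart_le_chart_approx[of y k]
        chart_approx_le_chart[of k x] small
      by (simp add: dist_real_def abs_le_iff abs_less_iff)
  qed
  with \<open>0 < d\<close> show "\<exists>d>0. \<forall>y\<in>UNIV. dist y x < d \<longrightarrow> dist (chart y) (chart x) < e"
    by blast
qed

lemma surj_chart: "surj chart"
proof -
  have "t \<in> range chart" for t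
  proof -
    have "chart (hpow \<lfloor>t\<rfloor> p) \<le> t" "t \<le> chart (hpow (\<lfloor>t\<rfloor> + 1) p)"
      by (simp_all add: chart_hpow_base)
    then obtain y where "chart y = t"
      using IVT'[OF _ _ hpow_mono_exponent continuous_on_subset[OF continuous_chart]] by fastforce
    then show ?thesis by blast
  qed
  then show ?thesis by auto
qed

lemma conjugate_to_affine_action:
  "\<exists>\<phi> \<phi>'. homeomorphism UNIV UNIV \<phi> \<phi>'
     \<and> \<phi> \<circ> g = (\<lambda>x::real. real n * x) \<circ> \<phi> \<and> \<phi> \<circ> h = (\<lambda>x. x + 1) \<circ> \<phi>"
proof -
  have "homeomorphism UNIV UNIV chart (inv_into UNIV chart)"
    by (rule strict_mono_surj_imp_homeomorphism[OF strict_mono_chart surj_chart])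
  moreover have "chart \<circ> g = (\<lambda>x. real n * x) \<circ> chart" "chart \<circ> h = (\<lambda>x. x + 1) \<circ> chart"
    by (simp_all add: fun_eq_iff chart_g chart_h)
  ultimately show ?thesis by blast
qed

end

lemma C1_fun_has_real_derivative: "C1_fun f \<Longrightarrow> (f has_real_derivative deriv f x) (at x)"
  unfolding C1_fun_def using DERIV_deriv_iff_real_differentiable by blast

lemma C1_fun_continuous: "C1_fun f \<Longrightarrow> continuous_on UNIV f"
  by (intro continuous_at_imp_continuous_on ballI DERIV_isCont[OF C1_fun_has_real_derivative])

lemma funpow_translation: "(\<lambda>x::real. x + 1) ^^ k = (\<lambda>x. x + real k)"
  by (induction k) (auto simp: algebra_simps)

lemma C1_close_to_translation_bounded_displacement:
  assumes "C1_diffeo h" and "\<And>x. \<bar>h x - (x + 1)\<bar> < 1/2" and "\<And>x. \<bar>deriv h x - 1\<bar> < 1/2"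
  shows "bounded_displacement h (1/2) (3/2)"
proof
  have "(h has_real_derivative deriv h x) (at x)" for x
    using assms(1) by (simp add: C1_diffeo_def C1_fun_has_real_derivative)
  moreover have "1/2 \<le> deriv h x" for x
    using abs_ge_minus_self[of "deriv h x - 1"] assms(3)[of x] by linarith
  ultimately have expanding: "1/2 * (y - x) \<le> h y - h x" if "x \<le> y" for x y
    using that by (rule deriv_ge_imp_expanding)
  show "strict_mono h"
  proof (rule strict_monoI)
    show "h x < h y" if "x < y" for x y
      using expanding[OF less_imp_le[OF that]] mult_pos_pos[of "1/2" "y - x"] that by linarith
  qed
  show "surj h"
    using assms(1) by (simp add: C1_diffeo_def bij_is_surj)
  show "x + 1/2 \<le> h x" "h x \<le> x + 3/2" for x
    using assms(2)[of x] abs_ge_self[of "h x - (x + 1)"] abs_ge_minus_self[of "h x - (x + 1)"]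
    by linarith+
qed simp

lemma C1_close_to_dilation_expanding:
  fixes n :: nat
  assumes "C1_diffeo g" and "2 \<le> n" and "\<And>x. \<bar>deriv g x - n\<bar> < 1/2" and "x \<le> y"
  shows "3/2 * (y - x) \<le> g y - g x"
proof (rule deriv_ge_imp_expanding[OF _ _ assms(4)])
  show "(g has_real_derivative deriv g x) (at x)" for x
    using assms(1) by (simp add: C1_diffeo_def C1_fun_has_real_derivative)
  show "3/2 \<le> deriv g x" for x
    using abs_ge_minus_self[of "deriv g x - n"] assms(2) assms(3)[of x] by linarith
qed

lemma hom_affine_BS_relation:
  assumes "\<psi> \<in> hom (subgroup_generated RBij {\<lambda>x. real n * x, \<lambda>x. x + 1}) (subgroup_generated RBij B)"
    and "0 < n"
  shows "\<psi> (\<lambda>x. real n * x) \<circ> \<psi> (\<lambda>x. x + 1) = (\<psi> (\<lambda>x. x + 1) ^^ n) \<circ> \<psi> (\<lambda>x. real n * x)"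
proof (rule hom_subgroup_generated_BijGroup_relation[OF assms(1)])
  show "bij (\<lambda>x::real. real n * x)"
    by (rule o_bij[of "\<lambda>y. y / real n"]) (use assms(2) in \<open>auto simp: fun_eq_iff\<close>)
  show "bij (\<lambda>x::real. x + 1)"
    by (rule o_bij[of "\<lambda>y. y - 1"]) (auto simp: fun_eq_iff)
  show "(\<lambda>x. real n * x) \<circ> (\<lambda>x. x + 1) = ((\<lambda>x. x + 1) ^^ n) \<circ> (\<lambda>x::real. real n * x)"
    by (simp add: funpow_translation fun_eq_iff algebra_simps)
qed

lemma C1_close_BS_action_conjugate:
  fixes g h :: "real \<Rightarrow> real" and n :: nat
  assumes "1 \<le> n" and "C1_diffeo g" and "C1_diffeo h" and "\<And>x. \<bar>deriv g x - n\<bar> < 1/2"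
    and "\<And>x. \<bar>h x - (x + 1)\<bar> < 1/2" and "\<And>x. \<bar>deriv h x - 1\<bar> < 1/2"
    and hom: "\<psi> \<in> hom (subgroup_generated RBij {\<lambda>x. real n * x, \<lambda>x. x + 1}) (subgroup_generated RBij {g, h})"
    and "\<psi> (\<lambda>x. real n * x) = g" and "\<psi> (\<lambda>x. x + 1) = h"
  shows "\<exists>\<phi> \<phi>'. homeomorphism UNIV UNIV \<phi> \<phi>'
           \<and> \<phi> \<circ> g = (\<lambda>x::real. real n * x) \<circ> \<phi> \<and> \<phi> \<circ> h = (\<lambda>x. x + 1) \<circ> \<phi>"
proof (cases "n = 1")
  case True
  then have dilation_id: "(\<lambda>x::real. real n * x) = id"
    by (simp add: id_def)
  then have "g = id"
    using hom_subgroup_generated_BijGroup_id[OF hom] assms(8) unfolding dilation_id by simp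
  then show ?thesis
    unfolding dilation_id
    using bounded_displacement.conjugate_to_translation[OF
        C1_close_to_translation_bounded_displacement[OF assms(3,5,6)]] by (simp add: o_def)
next
  case False
  with assms(1) have "2 \<le> n" by simp
  have relation: "g \<circ> h = (h ^^ n) \<circ> g"
    using hom_affine_BS_relation[OF hom] assms(1,8,9) by simp
  have continuous: "continuous_on UNIV g"
    using assms(2) by (simp add: C1_diffeo_def C1_fun_continuous)
  note expanding = C1_close_to_dilation_expanding[OF assms(2) \<open>2 \<le> n\<close> assms(4)]
  obtain p where "g p = p"
    using expanding_imp_fixed_point[OF continuous _ expanding] by auto
  interpret BS_action h p "1/2" "3/2" g n "3/2"
  proof (intro BS_action.intro BS_action_axioms.intro)
    show "bounded_displacement h (1/2) (3/2)"
      by (rule C1_close_to_translation_bounded_displacement[OF assms(3,5,6)])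
    show "g (h x) = (h ^^ n) (g x)" for x
      using relation by (metis comp_apply)
  qed (use \<open>2 \<le> n\<close> \<open>g p = p\<close> continuous expanding in auto)
  show ?thesis
    by (rule conjugate_to_affine_action)
qed

theorem theorem5p8:
  fixes n :: nat
  assumes "n \<ge> 1"
  defines "g0 \<equiv> (\<lambda>x::real. real n * x)" and "h0 \<equiv> (\<lambda>x::real. x + 1)"
  shows "\<exists>\<epsilon>>0. \<exists>\<delta>>0. \<forall>g h.
           C1_diffeo g \<and> C1_diffeo h
         \<and> (\<forall>x. \<bar>g x - g0 x\<bar> + \<bar>deriv g x - deriv g0 x\<bar> < \<epsilon>)
         \<and> (\<forall>x. \<bar>h x - h0 x\<bar> + \<bar>deriv h x - deriv h0 x\<bar> < \<delta>)
         \<and> (\<exists>\<psi>. \<psi> \<in> iso (subgroup_generated RBij {g0, h0}) (subgroup_generated RBij {g, h})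
                  \<and> \<psi> g0 = g \<and> \<psi> h0 = h)
         \<longrightarrow> (\<exists>\<phi> \<phi>'. homeomorphism UNIV UNIV \<phi> \<phi>' \<and> \<phi> \<circ> g = g0 \<circ> \<phi> \<and> \<phi> \<circ> h = h0 \<circ> \<phi>)"
proof -
  have deriv_g0: "deriv g0 x = n" and deriv_h0: "deriv h0 x = 1" for x
    unfolding g0_def h0_def by (auto intro!: DERIV_imp_deriv derivative_eq_intros)
  show ?thesis
    unfolding deriv_g0 deriv_h0
  proof ((intro exI[of _ "1/2"] conjI allI impI; (elim conjE exE)?), goal_cases)
    case (3 g h \<psi>)
    have "\<bar>deriv g x - n\<bar> < 1/2" "\<bar>h x - (x + 1)\<bar> < 1/2" "\<bar>deriv h x - 1\<bar> < 1/2" for x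
      using 3(3)[rule_format, of x] 3(4)[rule_format, of x] abs_ge_zero[of "g x - g0 x"]
        abs_ge_zero[of "deriv h x - 1"] abs_ge_zero[of "h x - h0 x"]
      unfolding h0_def by linarith+
    then show ?case
      using C1_close_BS_action_conjugate[OF assms(1) 3(1,2)] iso_imp_homomorphism[OF 3(5)] 3(6,7)
      unfolding g0_def h0_def by blast
  qed simp_all
qed

end
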